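(* For all $\mu\in\mathcal{P}(\overline{\mathbb{Z}})$, $$\lim_{\varepsilon\to0^+}\limsup_{n\to\infty}\frac1n\log\mathbb{P}_0\big(\ell_n\in B(\mu,\varepsilon)\big)\le-I(\mu).$$
   Context: $\overline{\mathbb{Z}}=\mathbb{Z}\cup\{-\infty,+\infty\}$ is the two-point compactification of $\mathbb{Z}$. Let $p:\mathbb{Z}\to[0,1]$ with $0<p(k)<1$ for all $k$ and limits $p_\pm=\lim_{k\to\pm\infty}p(k)\in(0,1)$. Under $\mathbb{P}_0$, $(S_n)_{n\ge1}$ is the Markov chain on $\overline{\mathbb{Z}}$ with $S_1=0$, $\pm\infty$ absorbing, $k\to k+1$ w.p. $p(k)$ and $k\to k-1$ w.p. $1-p(k)$ for $k\in\mathbb{Z}$; $\ell_n=\frac1n\sum_{j=1}^n\delta_{S_j}$. Metric on $\overline{\mathbb{Z}}$: $d(h,k)=|\varphi(h)-\varphi(k)|$, $\varphi(\pm\infty)=\pm1$, $\varphi(k)=1-2^{-k}$ ($k\ge0$), $\varphi(k)=-1+2^{-|k|}$ ($k<0$); $\|\nu\|=\sup\{\int f\,d\nu: f\text{ 1-Lipschitz for }d,\ \sup|f|\le1\}$; $B(\mu,\varepsilon)=\{\nu\in\mathcal{P}(\overline{\mathbb{Z}}):\|\nu-\mu\|<\varepsilon\}$. For $\mu=\alpha_-\delta_{-\infty}+\alpha_0\mu_0+\alpha_+\delta_{+\infty}$ ($\alpha_\sigma\ge0$ summing to 1, $\mu_0\in\mathcal{P}(\mathbb{Z})$, arbitrary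 if $\alpha_0=0$), with $0\cdot\infty=0$: $I(\mu)=\alpha_0 I_{\mathrm{DV}}(\mu_0)+\min\{\alpha_- I^{p_-}_{\mathrm{Cr}}(0)+\alpha_+\inf_{x\in[0,1]}I^{p_+}_{\mathrm{Cr}}(x)\,;\,\alpha_+ I^{p_+}_{\mathrm{Cr}}(0)+\alpha_-\inf_{x\in[-1,0]}I^{p_-}_{\mathrm{Cr}}(x)\}$, where $I_{\mathrm{DV}}(\nu)=\sup_{u_k\ge1}\sum_{k}\nu(k)\log\frac{u_k}{p(k)u_{k+1}+(1-p(k))u_{k-1}}$ and $I^q_{\mathrm{Cr}}(x)=\frac{1-x}{2}\log\frac{1-x}{2(1-q)}+\frac{1+x}{2}\log\frac{1+x}{2q}$ on $[-1,1]$, $+\infty$ elsewhere. *)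

theory Defs
  imports "HOL-Probability.Probability"
begin

datatype zbar = NegInf | Fin int | PosInf

fun phi :: "zbar \<Rightarrow> real" where
  "phi NegInf = -1"
| "phi PosInf = 1"
| "phi (Fin k) = (if 0 \<le> k then 1 - (1/2) ^ nat k else -1 + (1/2) ^ nat (- k))"

definition zdist :: "zbar \<Rightarrow> zbar \<Rightarrow> real" where
  "zdist h k = \<bar>phi h - phi k\<bar>"

definition BL_norm_diff :: "zbar pmf \<Rightarrow> zbar pmf \<Rightarrow> real" where
  "BL_norm_diff nu mu =
     (SUP f \<in> {f :: zbar \<Rightarrow> real. (\<forall>h k. \<bar>f h - f k\<bar> \<le> zdist h k) \<and> (\<forall>x. \<bar>f x\<bar> \<le> 1)}.
        measure_pmf.expectation nu f - measure_pmf.expectation mu f)"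

definition BLball :: "zbar pmf \<Rightarrow> real \<Rightarrow> zbar pmf set" where
  "BLball mu \<epsilon> = {nu. BL_norm_diff nu mu < \<epsilon>}"

fun step :: "(int \<Rightarrow> real) \<Rightarrow> zbar \<Rightarrow> zbar pmf" where
  "step p (Fin k) = map_pmf (\<lambda>b. if b then Fin (k + 1) else Fin (k - 1)) (bernoulli_pmf (p k))"
| "step p NegInf = return_pmf NegInf"
| "step p PosInf = return_pmf PosInf"

text \<open>walk p x m: law of the path [S_1, ..., S_(m+1)] of the chain started at S_1 = x.\<close>
fun walk :: "(int \<Rightarrow> real) \<Rightarrow> zbar \<Rightarrow> nat \<Rightarrow> zbar list pmf" where
  "walk p x 0 = return_pmf [x]"
| "walk p x (Suc m) = bind_pmf (step p x) (\<lambda>y. map_pmf (Cons x) (walk p y m))"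

definition empirical :: "zbar list \<Rightarrow> zbar pmf" where
  "empirical xs = pmf_of_multiset (mset xs)"

definition prob_ball :: "(int \<Rightarrow> real) \<Rightarrow> nat \<Rightarrow> zbar pmf \<Rightarrow> real \<Rightarrow> real" where
  "prob_ball p n mu \<epsilon> =
     measure_pmf.prob (walk p (Fin 0) (n - 1)) {xs. empirical xs \<in> BLball mu \<epsilon>}"

definition eln :: "real \<Rightarrow> ereal" where
  "eln x = (if x \<le> 0 then - \<infinity> else ereal (ln x))"

text \<open>Cramer rate function of a \<plusminus>1 Bernoulli step with P(+1) = q (0 log 0 = 0).\<close>
definition ICr :: "real \<Rightarrow> real \<Rightarrow> ereal" where
  "ICr q x = (if -1 \<le> x \<and> x \<le> 1 then
      ereal ((1 - x) / 2 * ln ((1 - x) / (2 * (1 - q))) + (1 + x) / 2 * ln ((1 + x) / (2 * q)))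
    else \<infinity>)"

definition IDV :: "(int \<Rightarrow> real) \<Rightarrow> (int \<Rightarrow> real) \<Rightarrow> ereal" where
  "IDV p nu = (SUP u \<in> {u :: int \<Rightarrow> real. (\<forall>k. 1 \<le> u k) \<and>
        (\<lambda>k. nu k * ln (u k / (p k * u (k + 1) + (1 - p k) * u (k - 1)))) summable_on UNIV}.
      ereal (\<Sum>\<^sub>\<infinity>k. nu k * ln (u k / (p k * u (k + 1) + (1 - p k) * u (k - 1)))))"

text \<open>The rate function I, via the decomposition
  mu = alpha_- delta_(-\<infinity>) + alpha_0 mu_0 + alpha_+ delta_(+\<infinity>) (0 * \<infinity> = 0 in ereal).\<close>
definition Irate :: "(int \<Rightarrow> real) \<Rightarrow> real \<Rightarrow> real \<Rightarrow> zbar pmf \<Rightarrow> ereal" where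
  "Irate p pm pp mu =
    (let am = pmf mu NegInf; ap = pmf mu PosInf; a0 = 1 - am - ap;
         mu0 = (\<lambda>k. pmf mu (Fin k) / a0)
     in ereal a0 * IDV p mu0
        + min (ereal am * ICr pm 0 + ereal ap * (INF x \<in> {0..1}. ICr pp x))
              (ereal ap * ICr pp 0 + ereal am * (INF x \<in> {-1..0}. ICr pm x)))"

end

theory Submission
  imports Defs
begin

(* For u > 0 on the integers (extended by 1 at the absorbing points) and V = log (u / P u), the
   product exp (V S_1 + ... + V S_(n-1)) * u S_n is a martingale with mean u 0. If W <= V is bounded
   and C-Lipschitz on the compactification and l_n lies in B(mu, eps), then
   W S_1 + ... + W S_n >= n (int W dmu - C eps), so that
   P (l_n in B(mu, eps), u S_n >= 1) <= u 0 * exp C * exp (- n (int W dmu - C eps)).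
   The event is split according to the sign of S_n. A near optimal Donsker-Varadhan function,
   truncated and restricted to a large window, is continued geometrically beyond the window with
   ratio l; there V tends to - log (q l + (1 - q) / l) with q the limiting drift, which is the
   Cramer value ICr q 0 for l = sqrt ((1 - q) / q) and 0 for l = 1. Requiring u >= 1 on the side
   where S_n lies forces l >= 1 on the right (l <= 1 on the left); this produces the infimum over
   [0, 1] (resp. [-1, 0]) in I, and the two sides give the two branches of the minimum. Cutting V
   off near the points at infinity makes W Lipschitz while int W dmu stays close to I(mu). *)

section \<open>The exponential martingale of the walk\<close>

lemma set_pmf_walk:
  "xs \<in> set_pmf (walk p x m) \<Longrightarrow> length xs = Suc m \<and> hd xs = x"
  by (induction m arbitrary: x xs) auto

lemma set_pmf_walk_Fin:
  "xs \<in> set_pmf (walk p (Fin k) m) \<Longrightarrow> set xs \<subseteq> range Fin"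
proof (induction m arbitrary: k xs)
  case (Suc m)
  then obtain z ys where z: "z \<in> set_pmf (step p (Fin k))" and ys: "ys \<in> set_pmf (walk p z m)"
    and xs: "xs = Fin k # ys"
    by (simp only: walk.simps set_bind_pmf set_map_pmf) blast
  from z obtain j where "z = Fin j" by auto
  with Suc.IH ys xs show ?case by auto
qed simp

definition dv_integrand :: "(int \<Rightarrow> real) \<Rightarrow> (int \<Rightarrow> real) \<Rightarrow> int \<Rightarrow> real" where
  "dv_integrand p u k = ln (u k / (p k * u (k + 1) + (1 - p k) * u (k - 1)))"

definition path_weight :: "(int \<Rightarrow> real) \<Rightarrow> (int \<Rightarrow> real) \<Rightarrow> zbar list \<Rightarrow> real" where
  "path_weight p u xs =
     exp (sum_list (map (case_zbar 0 (dv_integrand p u) 0) (butlast xs))) * case_zbar 1 u 1 (last xs)"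

lemma exp_dv_integrand_mult:
  assumes "0 < p k" "p k < 1" and u: "\<And>j. 0 < u j"
  shows "exp (dv_integrand p u k) * (p k * u (k + 1) + (1 - p k) * u (k - 1)) = u k"
proof -
  have "0 < p k * u (k + 1) + (1 - p k) * u (k - 1)"
    using assms u[of "k + 1"] u[of "k - 1"] by (simp add: add_pos_pos)
  then show ?thesis using u[of k] by (simp add: dv_integrand_def)
qed

lemma nn_integral_path_weight:
  assumes p: "\<And>k. 0 < p k \<and> p k < 1" and u: "\<And>k. 0 < u k"
  shows "(\<integral>\<^sup>+ xs. path_weight p u xs \<partial>walk p x m) = case_zbar 1 u 1 x"
proof (induction m arbitrary: x)
  case 0
  then show ?case by (simp add: path_weight_def)
next
  case (Suc m)
  let ?V = "case_zbar 0 (dv_integrand p u) 0"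
  have cons: "(\<integral>\<^sup>+ ys. path_weight p u (x # ys) \<partial>walk p y m) = exp (?V x) * case_zbar 1 u 1 y" for y
  proof -
    have "(\<integral>\<^sup>+ ys. path_weight p u (x # ys) \<partial>walk p y m)
        = (\<integral>\<^sup>+ ys. ennreal (exp (?V x)) * path_weight p u ys \<partial>walk p y m)"
    proof (intro nn_integral_cong_AE, unfold AE_measure_pmf_iff, intro ballI)
      fix ys assume "ys \<in> set_pmf (walk p y m)"
      then have "ys \<noteq> []" using set_pmf_walk[of ys p y m] by auto
      then show "ennreal (path_weight p u (x # ys)) = ennreal (exp (?V x)) * path_weight p u ys"
        by (simp add: path_weight_def exp_add ennreal_mult' mult.assoc)
    qed
    also have "\<dots> = exp (?V x) * case_zbar 1 u 1 y"
      using u by (simp add: nn_integral_cmult Suc ennreal_mult' split: zbar.split)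
    finally show ?thesis .
  qed
  show ?case
  proof (cases x)
    case (Fin k)
    have pk: "0 < p k" "p k < 1" using p[of k] by auto
    have "(\<integral>\<^sup>+ xs. path_weight p u xs \<partial>walk p x (Suc m))
        = ennreal (exp (dv_integrand p u k) * u (k + 1)) * p k
          + ennreal (exp (dv_integrand p u k) * u (k - 1)) * (1 - p k)"
      using pk by (simp add: Fin cons[unfolded Fin])
    also have "\<dots> = exp (dv_integrand p u k) * (p k * u (k + 1) + (1 - p k) * u (k - 1))"
      using pk u[of "k + 1"] u[of "k - 1"]
      by (simp add: ennreal_mult''[symmetric] ennreal_plus[symmetric] algebra_simps del: ennreal_plus)
    finally show ?thesis using Fin exp_dv_integrand_mult[of p k u] pk u by simp
  qed (use cons in simp_all)
qed

lemma path_weight_nonneg: "(\<And>k. 0 < u k) \<Longrightarrow> 0 \<le> path_weight p u xs"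
  by (simp add: path_weight_def less_imp_le split: zbar.split)

section \<open>Empirical measures and the exponential Chebyshev bound\<close>

lemma sum_list_map_eq_sum_count_real:
  "sum_list (map (f :: 'a \<Rightarrow> real) xs) = (\<Sum>x\<in>set xs. real (count_list xs x) * f x)"
proof (induction xs)
  case (Cons x xs)
  show ?case (is "?l = ?r")
  proof (cases "x \<in> set xs")
    case True
    have "?l = f x + (\<Sum>x\<in>set xs. real (count_list xs x) * f x)" by (simp add: Cons.IH)
    also have "set xs = insert x (set xs - {x})" using True by blast
    also have "f x + (\<Sum>x\<in>insert x (set xs - {x}). real (count_list xs x) * f x) = ?r"
      by (simp add: sum.insert_remove eq_commute algebra_simps)
    finally show ?thesis .
  next
    case False
    then have "count_list xs y = count_list (x # xs) y" if "y \<in> set xs" for y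
      using that by auto
    with False show ?thesis by (simp add: Cons.IH)
  qed
qed simp

lemma expectation_empirical:
  assumes "xs \<noteq> []"
  shows "measure_pmf.expectation (empirical xs) (f :: zbar \<Rightarrow> real) = sum_list (map f xs) / length xs"
proof -
  have "measure_pmf.expectation (empirical xs) f = (\<Sum>x\<in>set xs. pmf (empirical xs) x * f x)"
    using assms by (subst integral_measure_pmf[of "set xs"]) (auto simp: empirical_def)
  also have "\<dots> = (\<Sum>x\<in>set xs. real (count_list xs x) * f x) / length xs"
    using assms by (simp add: empirical_def sum_divide_distrib count_mset)
  finally show ?thesis by (simp add: sum_list_map_eq_sum_count_real)
qed

definition bounded_lipschitz :: "real \<Rightarrow> (zbar \<Rightarrow> real) \<Rightarrow> bool" where
  "bounded_lipschitz C f \<longleftrightarrow> (\<forall>x. \<bar>f x\<bar> \<le> C) \<and> (\<forall>h k. \<bar>f h - f k\<bar> \<le> C * zdist h k)"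

lemma abs_expectation_le:
  fixes f :: "'a \<Rightarrow> real"
  assumes "\<And>x. \<bar>f x\<bar> \<le> B"
  shows "\<bar>measure_pmf.expectation nu f\<bar> \<le> B"
proof -
  have int: "integrable (measure_pmf nu) f"
    using assms by (intro measure_pmf.integrable_const_bound[where B = B]) auto
  have "measure_pmf.expectation nu f \<le> B"
    using assms by (intro measure_pmf.integral_le_const[OF int]) (auto simp: abs_le_iff)
  moreover have "- B \<le> f x" for x using assms[of x] by linarith
  then have "- B \<le> measure_pmf.expectation nu f"
    by (intro measure_pmf.integral_ge_const[OF int]) auto
  ultimately show ?thesis by simp
qed

lemma expectation_diff_le_BL_norm_diff:
  assumes C: "0 < C" and f: "bounded_lipschitz C f"
  shows "measure_pmf.expectation mu f - measure_pmf.expectation nu f \<le> C * BL_norm_diff nu mu"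
proof -
  let ?Lip = "{g :: zbar \<Rightarrow> real. (\<forall>h k. \<bar>g h - g k\<bar> \<le> zdist h k) \<and> (\<forall>x. \<bar>g x\<bar> \<le> 1)}"
  let ?D = "\<lambda>g. measure_pmf.expectation nu g - measure_pmf.expectation mu g"
  define g where "g = (\<lambda>x. - f x / C)"
  have "\<bar>g h - g k\<bar> \<le> zdist h k" for h k
  proof -
    have "\<bar>g h - g k\<bar> = \<bar>f h - f k\<bar> / C"
      using C by (simp add: g_def abs_divide abs_minus_commute field_simps)
    also have "\<dots> \<le> zdist h k"
      using f C by (simp add: bounded_lipschitz_def divide_le_eq mult.commute)
    finally show ?thesis .
  qed
  moreover have "\<bar>g x\<bar> \<le> 1" for x
    using f C by (simp add: g_def bounded_lipschitz_def abs_divide divide_le_eq)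
  ultimately have "g \<in> ?Lip" by blast
  moreover have "bdd_above (?D ` ?Lip)"
  proof (rule bdd_aboveI)
    fix y assume "y \<in> ?D ` ?Lip"
    then obtain h where "h \<in> ?Lip" "y = ?D h" by blast
    then show "y \<le> 2"
      using abs_expectation_le[of h 1 nu] abs_expectation_le[of h 1 mu] by auto
  qed
  ultimately have "?D g \<le> BL_norm_diff nu mu"
    unfolding BL_norm_diff_def by (rule cSUP_upper)
  moreover have "?D g = (measure_pmf.expectation mu f - measure_pmf.expectation nu f) / C"
    by (simp add: g_def integral_divide_zero integral_minus diff_divide_distrib)
  ultimately show ?thesis using C by (simp add: divide_le_eq mult.commute)
qed

definition dv_test :: "(int \<Rightarrow> real) \<Rightarrow> (int \<Rightarrow> real) \<Rightarrow> (zbar \<Rightarrow> real) \<Rightarrow> real \<Rightarrow> bool" where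
  "dv_test p u W C \<longleftrightarrow>
     (\<forall>k. 0 < u k) \<and> (\<forall>k. W (Fin k) \<le> dv_integrand p u k) \<and> 0 < C \<and> bounded_lipschitz C W"

lemma path_weight_lower_bound:
  assumes test: "dv_test p u W C" and R: "\<forall>k\<in>R. 1 \<le> u k"
    and xs: "xs \<in> set_pmf (walk p (Fin 0) (n - 1))" and n: "1 \<le> n"
    and ball: "empirical xs \<in> BLball mu \<epsilon>" and last: "last xs \<in> Fin ` R"
  shows "exp (real n * (measure_pmf.expectation mu W - C * \<epsilon>) - C) \<le> path_weight p u xs"
proof -
  let ?V = "case_zbar 0 (dv_integrand p u) 0"
  have C: "0 < C" and W: "bounded_lipschitz C W" using test by (auto simp: dv_test_def)
  have len: "length xs = n" and ne: "xs \<noteq> []" using set_pmf_walk[OF xs] n by auto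
  have "C * BL_norm_diff (empirical xs) mu < C * \<epsilon>"
    using ball C by (simp add: BLball_def)
  then have "measure_pmf.expectation mu W - C * \<epsilon> < measure_pmf.expectation (empirical xs) W"
    using expectation_diff_le_BL_norm_diff[OF C W, of mu "empirical xs"] by linarith
  then have "real n * (measure_pmf.expectation mu W - C * \<epsilon>) < sum_list (map W xs)"
    using n by (simp add: expectation_empirical[OF ne] len pos_less_divide_eq mult.commute)
  moreover have "sum_list (map W xs) = sum_list (map W (butlast xs)) + W (last xs)"
    by (subst append_butlast_last_id[OF ne, symmetric], simp del: append_butlast_last_id)
  moreover have "sum_list (map W (butlast xs)) \<le> sum_list (map ?V (butlast xs))"
  proof (rule sum_list_mono)
    fix y assume "y \<in> set (butlast xs)"
    then have "y \<in> range Fin" using set_pmf_walk_Fin[OF xs] in_set_butlastD by (meson subsetD)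
    then show "W y \<le> ?V y" using test by (auto simp: dv_test_def)
  qed
  moreover have "W (last xs) \<le> C" using W by (auto simp: bounded_lipschitz_def abs_le_iff)
  ultimately have "exp (real n * (measure_pmf.expectation mu W - C * \<epsilon>) - C)
      \<le> exp (sum_list (map ?V (butlast xs)))"
    unfolding exp_le_cancel_iff by linarith
  also have "\<dots> \<le> path_weight p u xs"
  proof -
    have "1 \<le> case_zbar 1 u 1 (last xs)" using R last by auto
    then show ?thesis unfolding path_weight_def by (simp add: mult_le_cancel_left1)
  qed
  finally show ?thesis .
qed

lemma prob_ball_ends_in_le:
  assumes p: "\<And>k. 0 < p k \<and> p k < 1" and test: "dv_test p u W C" and R: "\<forall>k\<in>R. 1 \<le> u k"
    and n: "1 \<le> n"
  shows "measure_pmf.prob (walk p (Fin 0) (n - 1)) {xs. empirical xs \<in> BLball mu \<epsilon> \<and> last xs \<in> Fin ` R}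
     \<le> u 0 * exp C * exp (- (real n * (measure_pmf.expectation mu W - C * \<epsilon>)))"
proof -
  let ?M = "walk p (Fin 0) (n - 1)" and ?S = "{xs. empirical xs \<in> BLball mu \<epsilon> \<and> last xs \<in> Fin ` R}"
  define a where "a = real n * (measure_pmf.expectation mu W - C * \<epsilon>) - C"
  define c where "c = exp (- a)"
  have u: "\<And>k. 0 < u k" using test by (simp add: dv_test_def)
  have "emeasure ?M ?S = (\<integral>\<^sup>+ xs. indicator ?S xs \<partial>?M)" by simp
  also have "\<dots> \<le> (\<integral>\<^sup>+ xs. ennreal c * path_weight p u xs \<partial>?M)"
  proof (intro nn_integral_mono_AE, unfold AE_measure_pmf_iff, intro ballI)
    fix xs assume xs: "xs \<in> set_pmf ?M"
    have "indicator ?S xs \<le> c * path_weight p u xs"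
    proof (cases "xs \<in> ?S")
      case True
      then have "exp a \<le> path_weight p u xs"
        unfolding a_def using path_weight_lower_bound[OF test R xs n] by blast
      then have "c * exp a \<le> c * path_weight p u xs"
        by (simp add: c_def)
      then show ?thesis
        using True by (simp add: c_def exp_minus_inverse mult.commute)
    qed (simp add: c_def path_weight_nonneg[OF u])
    then have "ennreal (indicator ?S xs) \<le> ennreal (c * path_weight p u xs)"
      by (rule ennreal_leI)
    then show "indicator ?S xs \<le> ennreal c * path_weight p u xs"
      by (simp add: c_def ennreal_mult' ennreal_indicator)
  qed
  also have "\<dots> = ennreal (c * u 0)"
    using u by (simp add: nn_integral_cmult nn_integral_path_weight[OF p u] c_def ennreal_mult')
  also have "c * u 0 = u 0 * exp C * exp (- (real n * (measure_pmf.expectation mu W - C * \<epsilon>)))"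
    unfolding c_def a_def mult.assoc mult_exp_exp by (simp add: mult.commute)
  finally show ?thesis
    using u[of 0] by (simp add: measure_pmf.emeasure_eq_measure ennreal_le_iff)
qed

section \<open>Decay rates of the ball probabilities\<close>

definition ball_decay_rate :: "(int \<Rightarrow> real) \<Rightarrow> int set \<Rightarrow> zbar pmf \<Rightarrow> real \<Rightarrow> bool" where
  "ball_decay_rate p R mu r \<longleftrightarrow> (\<exists>K>0. \<exists>C\<ge>0. \<forall>\<epsilon>>0. \<forall>n\<ge>1.
     measure_pmf.prob (walk p (Fin 0) (n - 1)) {xs. empirical xs \<in> BLball mu \<epsilon> \<and> last xs \<in> Fin ` R}
       \<le> K * exp (- (real n * (r - C * \<epsilon>))))"

lemma ball_decay_rate_dv_test:
  assumes "\<And>k. 0 < p k \<and> p k < 1" and test: "dv_test p u W C" and "\<forall>k\<in>R. 1 \<le> u k"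
  shows "ball_decay_rate p R mu (measure_pmf.expectation mu W)"
  unfolding ball_decay_rate_def
proof (intro exI conjI allI impI)
  show "0 < u 0 * exp C" and "0 \<le> C" using test by (auto simp: dv_test_def)
qed (use prob_ball_ends_in_le[OF assms] in auto)

lemma ball_decay_rate_mono:
  assumes "ball_decay_rate p R mu r" and "r' \<le> r"
  shows "ball_decay_rate p R mu r'"
proof -
  obtain K C where "0 < K" "0 \<le> C" and bound: "\<And>\<epsilon> n. 0 < \<epsilon> \<Longrightarrow> 1 \<le> n \<Longrightarrow>
      measure_pmf.prob (walk p (Fin 0) (n - 1)) {xs. empirical xs \<in> BLball mu \<epsilon> \<and> last xs \<in> Fin ` R}
        \<le> K * exp (- (real n * (r - C * \<epsilon>)))"
    using assms(1) unfolding ball_decay_rate_def by blast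
  have "K * exp (- (real n * (r - C * \<epsilon>))) \<le> K * exp (- (real n * (r' - C * \<epsilon>)))" for n \<epsilon>
    using \<open>0 < K\<close> \<open>r' \<le> r\<close> by (simp add: mult_left_mono)
  with bound \<open>0 < K\<close> \<open>0 \<le> C\<close> show ?thesis
    unfolding ball_decay_rate_def by (meson order_trans)
qed

lemma ball_decay_rate_Un:
  assumes "ball_decay_rate p A mu r" and "ball_decay_rate p B mu r"
  shows "ball_decay_rate p (A \<union> B) mu r"
proof -
  let ?M = "\<lambda>n. walk p (Fin 0) (n - 1)"
  let ?E = "\<lambda>R \<epsilon>. {xs. empirical xs \<in> BLball mu \<epsilon> \<and> last xs \<in> Fin ` R}"
  obtain KA CA where KA: "0 < KA" "0 \<le> CA" and boundA: "\<And>\<epsilon> n. 0 < \<epsilon> \<Longrightarrow> 1 \<le> n \<Longrightarrow>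
      measure_pmf.prob (?M n) (?E A \<epsilon>) \<le> KA * exp (- (real n * (r - CA * \<epsilon>)))"
    using assms(1) unfolding ball_decay_rate_def by blast
  obtain KB CB where KB: "0 < KB" "0 \<le> CB" and boundB: "\<And>\<epsilon> n. 0 < \<epsilon> \<Longrightarrow> 1 \<le> n \<Longrightarrow>
      measure_pmf.prob (?M n) (?E B \<epsilon>) \<le> KB * exp (- (real n * (r - CB * \<epsilon>)))"
    using assms(2) unfolding ball_decay_rate_def by blast
  define C where "C = max CA CB"
  have "measure_pmf.prob (?M n) (?E (A \<union> B) \<epsilon>) \<le> (KA + KB) * exp (- (real n * (r - C * \<epsilon>)))"
    if "0 < \<epsilon>" "1 \<le> n" for \<epsilon> n
  proof -
    let ?z = "exp (- (real n * (r - C * \<epsilon>)))"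
    have "exp (- (real n * (r - CA * \<epsilon>))) \<le> ?z" and "exp (- (real n * (r - CB * \<epsilon>))) \<le> ?z"
      using that by (auto simp: C_def intro!: mult_left_mono mult_right_mono)
    then have "measure_pmf.prob (?M n) (?E A \<epsilon>) \<le> KA * ?z" "measure_pmf.prob (?M n) (?E B \<epsilon>) \<le> KB * ?z"
      using boundA[OF that] boundB[OF that] KA KB by (meson mult_left_mono order_trans less_imp_le)+
    then have "measure_pmf.prob (?M n) (?E A \<epsilon>) + measure_pmf.prob (?M n) (?E B \<epsilon>) \<le> (KA + KB) * ?z"
      by (simp add: distrib_right)
    moreover have "?E (A \<union> B) \<epsilon> = ?E A \<epsilon> \<union> ?E B \<epsilon>" by auto
    ultimately show ?thesis
      using measure_subadditive[of "?E A \<epsilon>" "?M n" "?E B \<epsilon>"]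
      by (simp add: measure_pmf.emeasure_eq_measure)
  qed
  moreover have "0 < KA + KB" "0 \<le> C" using KA KB by (auto simp: C_def)
  ultimately show ?thesis unfolding ball_decay_rate_def by blast
qed

lemma prob_ball_eq:
  "prob_ball p n mu \<epsilon> = measure_pmf.prob (walk p (Fin 0) (n - 1))
     {xs. empirical xs \<in> BLball mu \<epsilon> \<and> last xs \<in> Fin ` UNIV}"
  unfolding prob_ball_def
proof (rule measure_pmf.finite_measure_eq_AE)
  show "AE xs in walk p (Fin 0) (n - 1). (xs \<in> {xs. empirical xs \<in> BLball mu \<epsilon>}) =
      (xs \<in> {xs. empirical xs \<in> BLball mu \<epsilon> \<and> last xs \<in> Fin ` UNIV})"
    unfolding AE_measure_pmf_iff
  proof
    fix xs assume xs: "xs \<in> set_pmf (walk p (Fin 0) (n - 1))"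
    then have "last xs \<in> set xs" using set_pmf_walk[OF xs] by (intro last_in_set) auto
    then show "(xs \<in> {xs. empirical xs \<in> BLball mu \<epsilon>}) =
        (xs \<in> {xs. empirical xs \<in> BLball mu \<epsilon> \<and> last xs \<in> Fin ` UNIV})"
      using set_pmf_walk_Fin[OF xs] by auto
  qed
qed auto

lemma eln_mono: "x \<le> y \<Longrightarrow> eln x \<le> eln y"
  by (auto simp: eln_def)

lemma limsup_ln_le_of_exp_bound:
  fixes P :: "nat \<Rightarrow> real"
  assumes bound: "\<And>n. 1 \<le> n \<Longrightarrow> P n \<le> K * exp (- (real n * s))" and K: "0 < K"
  shows "limsup (\<lambda>n. ereal (1 / real n) * eln (P n)) \<le> ereal (- s)"
proof -
  have "eventually (\<lambda>n. ereal (1 / real n) * eln (P n) \<le> ereal (ln K / real n - s)) sequentially"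
    using eventually_ge_at_top[of 1]
  proof eventually_elim
    case (elim n)
    show ?case
    proof (cases "P n \<le> 0")
      case False
      then have "ln (P n) \<le> ln (K * exp (- (real n * s)))"
        using bound[OF elim] by (intro ln_mono) auto
      also have "\<dots> = ln K - real n * s" using K by (simp add: ln_mult)
      finally have "ln (P n) / real n \<le> (ln K - real n * s) / real n"
        by (rule divide_right_mono) simp
      then show ?thesis
        using False elim by (simp add: eln_def diff_divide_distrib)
    qed (use elim in \<open>simp add: eln_def\<close>)
  qed
  then have "limsup (\<lambda>n. ereal (1 / real n) * eln (P n)) \<le> limsup (\<lambda>n. ereal (ln K / real n - s))"
    by (rule Limsup_mono)
  also have "\<dots> = ereal (- s)"
    by (intro lim_imp_Limsup) (auto intro!: tendsto_eq_intros lim_const_over_n)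
  finally show ?thesis .
qed

lemma INF_limsup_prob_ball_le:
  assumes "ball_decay_rate p UNIV mu r"
  shows "(INF \<epsilon>\<in>{0<..}. limsup (\<lambda>n. ereal (1 / real n) * eln (prob_ball p n mu \<epsilon>))) \<le> ereal (- r)"
    (is "?L \<le> _")
proof -
  obtain K C where K: "0 < K" and C: "0 \<le> C" and bound: "\<And>\<epsilon> n. 0 < \<epsilon> \<Longrightarrow> 1 \<le> n \<Longrightarrow>
      prob_ball p n mu \<epsilon> \<le> K * exp (- (real n * (r - C * \<epsilon>)))"
    using assms unfolding ball_decay_rate_def prob_ball_eq by blast
  show ?thesis
  proof (rule ereal_le_epsilon2)
    fix d :: real assume d: "0 < d"
    define \<epsilon> where "\<epsilon> = d / (C + 1)"
    have \<epsilon>: "0 < \<epsilon>" "C * \<epsilon> \<le> d"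
      using C d by (auto simp: \<epsilon>_def field_simps)
    have "?L \<le> limsup (\<lambda>n. ereal (1 / real n) * eln (prob_ball p n mu \<epsilon>))"
      using \<epsilon> by (intro INF_lower) auto
    also have "\<dots> \<le> ereal (- (r - C * \<epsilon>))"
      using bound[OF \<epsilon>(1)] K by (rule limsup_ln_le_of_exp_bound)
    also have "\<dots> \<le> ereal (- r) + ereal d" using \<epsilon> by simp
    finally show "?L \<le> ereal (- r) + ereal d" .
  qed
qed

lemma tendsto_limsup_prob_ball:
  "((\<lambda>\<epsilon>. limsup (\<lambda>n. ereal (1 / real n) * eln (prob_ball p n mu \<epsilon>))) \<longlongrightarrow>
     (INF \<epsilon>\<in>{0<..}. limsup (\<lambda>n. ereal (1 / real n) * eln (prob_ball p n mu \<epsilon>)))) (at_right 0)"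
  (is "(?f \<longlongrightarrow> _) _")
proof -
  have "prob_ball p n mu a \<le> prob_ball p n mu b" if "a \<le> b" for n a b
    unfolding prob_ball_def using that
    by (intro measure_pmf.finite_measure_mono) (auto simp: BLball_def)
  then have mono: "limsup (\<lambda>n. ereal (1 / real n) * eln (prob_ball p n mu a))
      \<le> limsup (\<lambda>n. ereal (1 / real n) * eln (prob_ball p n mu b))" if "a \<le> b" for a b
    using that by (intro Limsup_mono always_eventually allI ereal_mult_left_mono eln_mono) auto
  have "(?f \<longlongrightarrow> Inf (?f ` ({0<..} \<inter> UNIV))) (at 0 within ({0<..} \<inter> UNIV))"
    by (rule Lim_right_bound[where K = "-\<infinity>"]) (auto intro: mono)
  then show ?thesis by simp
qed

section \<open>Construction of test functions\<close>

definition dv_geometric :: "real \<Rightarrow> real \<Rightarrow> real" where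
  "dv_geometric q l = - ln (q * l + (1 - q) / l)"

lemma dv_integrand_geometric:
  assumes "0 < u k" "0 < l" "u (k + 1) = u k * l" "u (k - 1) = u k / l"
  shows "dv_integrand p u k = dv_geometric (p k) l"
proof -
  have "p k * u (k + 1) + (1 - p k) * u (k - 1) = u k * (p k * l + (1 - p k) / l)"
    using assms by (simp add: algebra_simps)
  then show ?thesis
    using assms by (simp add: dv_integrand_def dv_geometric_def ln_div)
qed

lemma tendsto_dv_geometric:
  assumes "(p \<longlongrightarrow> q) F" "0 < q" "q < 1" "0 < l"
  shows "((\<lambda>k. dv_geometric (p k) l) \<longlongrightarrow> dv_geometric q l) F"
proof -
  have "0 < q * l + (1 - q) / l" using assms by (simp add: add_pos_pos)
  then show ?thesis
    unfolding dv_geometric_def using assms by (auto intro!: tendsto_eq_intros)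
qed

lemma dv_integrand_ge_neg_ln:
  assumes p: "0 < p k" "p k < 1" and u: "0 < u k" "0 < u (k + 1)" "0 < u (k - 1)"
    and \<rho>: "u (k + 1) \<le> \<rho> * u k" "u (k - 1) \<le> \<rho> * u k"
  shows "- ln \<rho> \<le> dv_integrand p u k"
proof -
  let ?d = "p k * u (k + 1) + (1 - p k) * u (k - 1)"
  have d: "0 < ?d" using p u by (simp add: add_pos_pos)
  have "?d \<le> p k * (\<rho> * u k) + (1 - p k) * (\<rho> * u k)"
    using p \<rho> by (intro add_mono mult_left_mono) auto
  then have "?d \<le> \<rho> * u k" by (simp add: algebra_simps)
  moreover have "0 < \<rho> * u k" using \<rho> u by linarith
  then have "0 < \<rho>" using u by (simp add: zero_less_mult_iff)
  ultimately have "1 / \<rho> \<le> u k / ?d"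
    using d u by (simp add: field_simps)
  then have "ln (1 / \<rho>) \<le> ln (u k / ?d)"
    using \<open>0 < \<rho>\<close> by (intro ln_mono) auto
  then show ?thesis using \<open>0 < \<rho>\<close> by (simp add: dv_integrand_def ln_div)
qed

lemma dv_integrand_truncate:
  assumes p: "0 < p k" "p k < 1" and u: "\<And>j. 1 \<le> u j" and c: "1 \<le> c"
  shows dv_integrand_truncate_ge_min: "min (dv_integrand p u k) 0 \<le> dv_integrand p (\<lambda>j. min (u j) c) k"
    and dv_integrand_truncate_ge: "u k \<le> c \<Longrightarrow> dv_integrand p u k \<le> dv_integrand p (\<lambda>j. min (u j) c) k"
proof -
  let ?d = "p k * u (k + 1) + (1 - p k) * u (k - 1)"
  let ?dc = "p k * min (u (k + 1)) c + (1 - p k) * min (u (k - 1)) c"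
  have u0: "0 < u j" for j using u[of j] by simp
  have dc: "0 < ?dc" using p u0 c by (simp add: add_pos_pos)
  have dc_le: "?dc \<le> ?d" using p by (intro add_mono mult_left_mono) auto
  show ge: "dv_integrand p u k \<le> dv_integrand p (\<lambda>j. min (u j) c) k" if "u k \<le> c"
  proof -
    have "u k / ?d \<le> u k / ?dc" using dc dc_le u0[of k] by (intro divide_left_mono) auto
    then have "ln (u k / ?d) \<le> ln (u k / ?dc)"
      using dc dc_le u0[of k] by (intro ln_mono) auto
    then show ?thesis using that by (simp add: dv_integrand_def)
  qed
  show "min (dv_integrand p u k) 0 \<le> dv_integrand p (\<lambda>j. min (u j) c) k"
  proof (cases "u k \<le> c")
    case False
    have "?dc \<le> p k * c + (1 - p k) * c" using p by (intro add_mono mult_left_mono) auto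
    then have "1 \<le> c / ?dc" using dc by (simp add: algebra_simps)
    then have "0 \<le> dv_integrand p (\<lambda>j. min (u j) c) k"
      using False by (simp add: dv_integrand_def)
    then show ?thesis by simp
  qed (use ge in simp)
qed

lemma summable_on_finite_approx:
  fixes g :: "'a \<Rightarrow> real"
  assumes g: "g summable_on UNIV" and e: "0 < e"
  obtains F where "finite F" and "infsum g UNIV - e \<le> sum g F"
    and "\<And>G. finite G \<Longrightarrow> G \<inter> F = {} \<Longrightarrow> - (2 * e) \<le> (\<Sum>k\<in>G. min (g k) 0)"
proof -
  let ?S = "infsum g UNIV"
  have "(sum g \<longlongrightarrow> ?S) (finite_subsets_at_top UNIV)"
    using g unfolding summable_iff_has_sum_infsum has_sum_def .
  then have "eventually (\<lambda>F. dist (sum g F) ?S < e) (finite_subsets_at_top UNIV)"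
    using e by (rule tendstoD)
  then obtain F where F: "finite F" and close: "\<And>G. finite G \<Longrightarrow> F \<subseteq> G \<Longrightarrow> dist (sum g G) ?S < e"
    unfolding eventually_finite_subsets_at_top by auto
  have "- (2 * e) \<le> (\<Sum>k\<in>G. min (g k) 0)" if G: "finite G" "G \<inter> F = {}" for G
  proof -
    let ?N = "{k\<in>G. g k < 0}"
    have "(\<Sum>k\<in>G. min (g k) 0) = (\<Sum>k\<in>G. if g k < 0 then g k else 0)"
      by (rule sum.cong) auto
    also have "\<dots> = sum g ?N" using G by (simp add: sum.inter_filter)
    finally have "(\<Sum>k\<in>G. min (g k) 0) = sum g ?N" .
    moreover have "sum g (F \<union> ?N) = sum g F + sum g ?N"
      using F G by (intro sum.union_disjoint) auto
    moreover have "dist (sum g (F \<union> ?N)) ?S < e" "dist (sum g F) ?S < e"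
      using F G by (simp_all add: close)
    ultimately show ?thesis by (simp add: dist_real_def abs_less_iff)
  qed
  moreover have "?S - e \<le> sum g F"
    using close[OF F order_refl] by (simp add: dist_real_def abs_less_iff)
  ultimately show thesis using that F by blast
qed

lemma dv_sum_truncation:
  assumes p: "\<And>k. 0 < p k \<and> p k < 1" and u: "\<And>k. 1 \<le> u k" and m: "\<And>k. 0 \<le> m k"
    and sm: "(\<lambda>k. m k * dv_integrand p u k) summable_on UNIV" and e: "0 < e"
  obtains c F where "1 \<le> c" and "finite F"
    and "\<And>G. finite G \<Longrightarrow> F \<subseteq> G \<Longrightarrow>
       (\<Sum>\<^sub>\<infinity>k. m k * dv_integrand p u k) - 3 * e \<le> (\<Sum>k\<in>G. m k * dv_integrand p (\<lambda>j. min (u j) c) k)"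
proof -
  let ?g = "\<lambda>k. m k * dv_integrand p u k"
  obtain F where F: "finite F" and near: "infsum ?g UNIV - e \<le> sum ?g F"
    and tail: "\<And>G. finite G \<Longrightarrow> G \<inter> F = {} \<Longrightarrow> - (2 * e) \<le> (\<Sum>k\<in>G. min (?g k) 0)"
    using summable_on_finite_approx[OF sm e] by blast
  define c where "c = 1 + (\<Sum>k\<in>F. u k)"
  let ?gc = "\<lambda>k. m k * dv_integrand p (\<lambda>j. min (u j) c) k"
  have u0: "0 \<le> u k" for k using u[of k] by simp
  have c: "1 \<le> c" using u0 by (simp add: c_def sum_nonneg)
  have "u k \<le> c" if "k \<in> F" for k
    using member_le_sum[of k F u] that F u0 by (simp add: c_def)
  then have head: "sum ?g F \<le> sum ?gc F"
    using p m dv_integrand_truncate_ge[OF _ _ u c] by (intro sum_mono mult_left_mono) auto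
  have min_le: "min (?g k) 0 \<le> ?gc k" for k
  proof -
    have "min (?g k) 0 = m k * min (dv_integrand p u k) 0"
      using m[of k] by (cases "dv_integrand p u k \<le> 0") (auto simp: mult_nonneg_nonpos)
    also have "\<dots> \<le> ?gc k"
      using p m dv_integrand_truncate_ge_min[OF _ _ u c] by (intro mult_left_mono) auto
    finally show ?thesis .
  qed
  have rest: "- (2 * e) \<le> sum ?gc (G - F)" if "finite G" for G
  proof -
    have "- (2 * e) \<le> (\<Sum>k\<in>G - F. min (?g k) 0)" using tail[of "G - F"] that by auto
    also have "\<dots> \<le> sum ?gc (G - F)" by (rule sum_mono) (rule min_le)
    finally show ?thesis .
  qed
  have "infsum ?g UNIV - 3 * e \<le> sum ?gc G" if "finite G" "F \<subseteq> G" for G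
    using near head rest[OF that(1)] sum.subset_diff[OF that(2,1), of ?gc] by linarith
  with c F show thesis by (intro that)
qed

(* Both lp and lm are ratios u (k + 1) / u k, to the right of the window and to its left. *)
definition geom_extend :: "int \<Rightarrow> real \<Rightarrow> real \<Rightarrow> (int \<Rightarrow> real) \<Rightarrow> int \<Rightarrow> real" where
  "geom_extend K lm lp u k =
     (if K < k then u K * lp ^ nat (k - K) else if k < -K then u (-K) / lm ^ nat (-K - k) else u k)"

lemma geom_extend_inner: "\<bar>k\<bar> \<le> K \<Longrightarrow> geom_extend K lm lp u k = u k"
  by (simp add: geom_extend_def abs_le_iff)

lemma geom_extend_pos:
  "(\<And>j. 0 < u j) \<Longrightarrow> 0 < lm \<Longrightarrow> 0 < lp \<Longrightarrow> 0 < geom_extend K lm lp u k"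
  by (simp add: geom_extend_def)

lemma geom_extend_step_right:
  assumes "0 \<le> K" "K < k" "0 < lp"
  shows "geom_extend K lm lp u (k + 1) = geom_extend K lm lp u k * lp"
    and "geom_extend K lm lp u (k - 1) = geom_extend K lm lp u k / lp"
proof -
  have "nat (k + 1 - K) = Suc (nat (k - K))" using assms by simp
  then show "geom_extend K lm lp u (k + 1) = geom_extend K lm lp u k * lp"
    using assms by (simp add: geom_extend_def)
  show "geom_extend K lm lp u (k - 1) = geom_extend K lm lp u k / lp"
  proof (cases "k = K + 1")
    case False
    then have "nat (k - K) = Suc (nat (k - 1 - K))" using assms by simp
    then show ?thesis using False assms by (simp add: geom_extend_def)
  qed (use assms in \<open>simp add: geom_extend_def\<close>)
qed

lemma geom_extend_step_left:
  assumes "0 \<le> K" "k < -K" "0 < lm"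
  shows "geom_extend K lm lp u (k + 1) = geom_extend K lm lp u k * lm"
    and "geom_extend K lm lp u (k - 1) = geom_extend K lm lp u k / lm"
proof -
  have "nat (-K - (k - 1)) = Suc (nat (-K - k))" using assms by simp
  then show "geom_extend K lm lp u (k - 1) = geom_extend K lm lp u k / lm"
    using assms by (simp add: geom_extend_def)
  show "geom_extend K lm lp u (k + 1) = geom_extend K lm lp u k * lm"
  proof (cases "k = -K - 1")
    case False
    then have "nat (-K - k) = Suc (nat (-K - (k + 1)))" using assms by simp
    then show ?thesis using False assms by (simp add: geom_extend_def)
  qed (use assms in \<open>simp add: geom_extend_def\<close>)
qed

lemma geom_extend_ge_one:
  assumes u: "\<And>j. 1 \<le> u j" and "0 \<le> K"
  shows geom_extend_ge_one_right: "1 \<le> lp \<Longrightarrow> 0 \<le> k \<Longrightarrow> 1 \<le> geom_extend K lm lp u k"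
    and geom_extend_ge_one_left: "0 < lm \<Longrightarrow> lm \<le> 1 \<Longrightarrow> k < 0 \<Longrightarrow> 1 \<le> geom_extend K lm lp u k"
proof -
  show "1 \<le> geom_extend K lm lp u k" if "1 \<le> lp" "0 \<le> k"
  proof -
    have "1 * 1 \<le> u K * lp ^ nat (k - K)"
      using u[of K] one_le_power[OF that(1)] by (intro mult_mono) auto
    then show ?thesis using u[of k] that \<open>0 \<le> K\<close> by (auto simp: geom_extend_def)
  qed
  show "1 \<le> geom_extend K lm lp u k" if "0 < lm" "lm \<le> 1" "k < 0"
  proof -
    have "lm ^ nat (-K - k) \<le> 1" using that by (simp add: power_le_one)
    then have "lm ^ nat (-K - k) \<le> u (-K)" using u[of "-K"] by linarith
    then show ?thesis using u[of k] that \<open>0 \<le> K\<close> by (auto simp: geom_extend_def)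
  qed
qed

lemma geom_extend_succ_le:
  assumes u: "\<And>j. 1 \<le> u j" "\<And>j. u j \<le> c" and K: "0 \<le> K" and lm: "0 < lm" and lp: "0 < lp"
    and \<rho>: "c \<le> \<rho>" "lp \<le> \<rho>" "lm \<le> \<rho>"
  shows "geom_extend K lm lp u (k + 1) \<le> \<rho> * geom_extend K lm lp u k"
proof -
  let ?U = "geom_extend K lm lp u"
  have "0 < u j" for j using u(1)[of j] by linarith
  then have "0 < ?U k" using lm lp by (intro geom_extend_pos)
  then have scale: "?U k * a \<le> \<rho> * ?U k" if "a \<le> \<rho>" for a
    using that by (simp add: mult.commute mult_right_mono)
  consider (right) "K < k" | (left) "k < -K" | (edge) "k = K" | (inner) "\<bar>k\<bar> \<le> K" "\<bar>k + 1\<bar> \<le> K"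
    by linarith
  then show ?thesis
  proof cases
    case right
    then show ?thesis using geom_extend_step_right(1)[OF K right lp] scale \<rho> by simp
  next
    case left
    then show ?thesis using geom_extend_step_left(1)[OF K left lm] scale \<rho> by simp
  next
    case edge
    then show ?thesis using scale[of lp] \<rho> K by (simp add: geom_extend_def)
  next
    case inner
    have "u (k + 1) \<le> \<rho> * 1" using u(2)[of "k + 1"] \<rho> by simp
    also have "\<dots> \<le> \<rho> * u k"
      using u(1)[of k] u(1)[of 0] u(2)[of 0] \<rho>(1) by (intro mult_left_mono) linarith+
    finally show ?thesis using inner by (simp add: geom_extend_inner)
  qed
qed

lemma geom_extend_pred_le:
  assumes u: "\<And>j. 1 \<le> u j" "\<And>j. u j \<le> c" and K: "0 \<le> K" and lm: "0 < lm" and lp: "0 < lp"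
    and \<rho>: "c \<le> \<rho>" "1 / lp \<le> \<rho>" "1 / lm \<le> \<rho>"
  shows "geom_extend K lm lp u (k - 1) \<le> \<rho> * geom_extend K lm lp u k"
proof -
  let ?U = "geom_extend K lm lp u"
  have "0 < u j" for j using u(1)[of j] by linarith
  then have "0 < ?U k" using lm lp by (intro geom_extend_pos)
  then have scale: "?U k * a \<le> \<rho> * ?U k" if "a \<le> \<rho>" for a
    using that by (simp add: mult.commute mult_right_mono)
  consider (right) "K < k" | (left) "k < -K" | (edge) "k = -K" | (inner) "\<bar>k\<bar> \<le> K" "\<bar>k - 1\<bar> \<le> K"
    by linarith
  then show ?thesis
  proof cases
    case right
    then show ?thesis using geom_extend_step_right(2)[OF K right lp] scale[of "1 / lp"] \<rho> by simp
  next
    case left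
    then show ?thesis using geom_extend_step_left(2)[OF K left lm] scale[of "1 / lm"] \<rho> by simp
  next
    case edge
    then show ?thesis using scale[of "1 / lm"] \<rho> K by (simp add: geom_extend_def)
  next
    case inner
    have "u (k - 1) \<le> \<rho> * 1" using u(2)[of "k - 1"] \<rho> by simp
    also have "\<dots> \<le> \<rho> * u k"
      using u(1)[of k] u(1)[of 0] u(2)[of 0] \<rho>(1) by (intro mult_left_mono) linarith+
    finally show ?thesis using inner by (simp add: geom_extend_inner)
  qed
qed

lemma phi_Fin_mono:
  assumes "i \<le> j"
  shows "phi (Fin i) \<le> phi (Fin j)"
proof -
  consider "0 \<le> i" | "i < 0" "0 \<le> j" | "j < 0" using assms by linarith
  then show ?thesis
  proof cases
    case 1
    then have "(1/2::real) ^ nat j \<le> (1/2) ^ nat i" using assms by (intro power_decreasing) auto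
    then show ?thesis using 1 assms by simp
  next
    case 2
    have "(1/2::real) ^ nat (- i) \<le> (1/2) ^ 1" using 2 by (intro power_decreasing) auto
    moreover have "(1/2::real) ^ nat j \<le> 1" by (simp add: power_le_one)
    ultimately show ?thesis using 2 by simp
  next
    case 3
    then have "(1/2::real) ^ nat (- i) \<le> (1/2) ^ nat (- j)" using assms by (intro power_decreasing) auto
    then show ?thesis using 3 assms by simp
  qed
qed

lemma phi_Fin_bounds: "- 1 \<le> phi (Fin i)" "phi (Fin i) \<le> 1"
  using power_le_one[of "1/2::real" "nat i"] power_le_one[of "1/2::real" "nat (- i)"] by auto

lemma phi_Fin_gap:
  assumes "i < j"
  shows "(1/2::real) ^ (nat \<bar>i\<bar> + 1) \<le> phi (Fin j) - phi (Fin i)"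
proof -
  have "(1/2::real) ^ (nat \<bar>i\<bar> + 1) \<le> phi (Fin (i + 1)) - phi (Fin i)"
  proof (cases "0 \<le> i")
    case True
    then have "nat (i + 1) = nat i + 1" by simp
    then show ?thesis using True by simp
  next
    case False
    then have "nat (- i) = nat (- (i + 1)) + 1" and "nat \<bar>i\<bar> = nat (- i)" by simp_all
    moreover have "(1/2::real) ^ (nat (- i) + 1) \<le> (1/2) ^ nat (- i)"
      by (intro power_decreasing) auto
    ultimately show ?thesis using False by (cases "i = -1") simp_all
  qed
  also have "\<dots> \<le> phi (Fin j) - phi (Fin i)" using phi_Fin_mono[of "i + 1" j] assms by simp
  finally show ?thesis .
qed

definition zbar_clamp :: "int \<Rightarrow> zbar \<Rightarrow> int" where
  "zbar_clamp K x = (case x of NegInf \<Rightarrow> -K | Fin j \<Rightarrow> max (-K) (min K j) | PosInf \<Rightarrow> K)"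

lemma zbar_clamp_range: "0 \<le> K \<Longrightarrow> zbar_clamp K x \<in> {-K..K}"
  by (cases x) (auto simp: zbar_clamp_def)

lemma phi_le_phi_zbar_clamp: "0 \<le> K \<Longrightarrow> zbar_clamp K x < K \<Longrightarrow> phi x \<le> phi (Fin (zbar_clamp K x))"
  by (cases x) (auto simp: zbar_clamp_def phi_Fin_bounds intro: phi_Fin_mono)

lemma phi_zbar_clamp_le_phi: "0 \<le> K \<Longrightarrow> - K < zbar_clamp K x \<Longrightarrow> phi (Fin (zbar_clamp K x)) \<le> phi x"
  by (cases x) (auto simp: zbar_clamp_def phi_Fin_bounds intro: phi_Fin_mono)

lemma zdist_ge_of_zbar_clamp_less:
  assumes K: "0 \<le> K" and less: "zbar_clamp K h < zbar_clamp K k"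
  shows "(1/2::real) ^ (nat K + 1) \<le> zdist h k"
proof -
  have range: "zbar_clamp K h \<in> {-K..K}" "zbar_clamp K k \<in> {-K..K}" using zbar_clamp_range[OF K] by auto
  have "(1/2::real) ^ (nat K + 1) \<le> (1/2) ^ (nat \<bar>zbar_clamp K h\<bar> + 1)"
    using range by (intro power_decreasing) auto
  also have "\<dots> \<le> phi (Fin (zbar_clamp K k)) - phi (Fin (zbar_clamp K h))" by (rule phi_Fin_gap[OF less])
  also have "\<dots> \<le> phi k - phi h"
    using phi_le_phi_zbar_clamp[OF K, of h] phi_zbar_clamp_le_phi[OF K, of k] less range by auto
  also have "\<dots> \<le> zdist h k" by (simp add: zdist_def)
  finally show ?thesis .
qed

lemma bounded_lipschitz_eventually_const:
  assumes K: "0 < K" and right: "\<And>j. K \<le> j \<Longrightarrow> W (Fin j) = W PosInf"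
    and left: "\<And>j. j \<le> -K \<Longrightarrow> W (Fin j) = W NegInf"
  obtains C where "0 < C" and "bounded_lipschitz C W"
proof -
  define rep where "rep i = (if i = K then PosInf else if i = -K then NegInf else Fin i)" for i
  have W_clamp: "W x = W (rep (zbar_clamp K x))" for x
    using right left K by (cases x) (auto simp: rep_def zbar_clamp_def max_def min_def)
  define B where "B = 1 + (\<Sum>i\<in>{-K..K}. \<bar>W (rep i)\<bar>)"
  have B: "\<bar>W x\<bar> \<le> B - 1" for x
    using W_clamp[of x] member_le_sum[of "zbar_clamp K x" "{-K..K}" "\<lambda>i. \<bar>W (rep i)\<bar>"] zbar_clamp_range K
    by (simp add: B_def)
  define C where "C = B * 2 ^ (nat K + 2)"
  have "1 \<le> B" using B[of PosInf] by simp
  then have "B * 1 \<le> B * 2 ^ (nat K + 2)" by (intro mult_left_mono one_le_power) auto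
  then have "B \<le> C" by (simp add: C_def)
  then have bounded: "\<bar>W x\<bar> \<le> C" for x using B[of x] by simp
  have "\<bar>W h - W k\<bar> \<le> C * zdist h k" for h k
  proof (cases "zbar_clamp K h = zbar_clamp K k")
    case True
    then show ?thesis using W_clamp[of h] W_clamp[of k] \<open>B \<le> C\<close> \<open>1 \<le> B\<close> by (simp add: zdist_def)
  next
    case False
    have "zdist k h = zdist h k" by (simp add: zdist_def abs_minus_commute)
    with False have "(1/2::real) ^ (nat K + 1) \<le> zdist h k"
      using zdist_ge_of_zbar_clamp_less[of K h k] zdist_ge_of_zbar_clamp_less[of K k h] K
      by (cases "zbar_clamp K h < zbar_clamp K k") auto
    then have "C * (1/2) ^ (nat K + 1) \<le> C * zdist h k"
      using \<open>1 \<le> B\<close> \<open>B \<le> C\<close> by (intro mult_left_mono) auto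
    moreover have "C * (1/2) ^ (nat K + 1) = 2 * B" by (simp add: C_def power_add power_one_over)
    moreover have "\<bar>W h - W k\<bar> \<le> 2 * B" using B[of h] B[of k] by linarith
    ultimately show ?thesis by linarith
  qed
  with bounded \<open>1 \<le> B\<close> \<open>B \<le> C\<close> show thesis
    by (intro that) (auto simp: bounded_lipschitz_def)
qed

(* Lipschitz continuity on the compactification forces W to be nearly constant near the points
   at infinity, hence the cut-off slightly below the limits of V. *)
lemma exists_cutoff:
  fixes V :: "int \<Rightarrow> real"
  assumes top: "(V \<longlongrightarrow> a) at_top" and bot: "(V \<longlongrightarrow> b) at_bot" and e: "0 < e"
  obtains W C where "0 < C" and "bounded_lipschitz C W" and "\<And>k. W (Fin k) \<le> V k"
    and "W NegInf = b - e" and "W PosInf = a - e" and "\<And>k. \<bar>k\<bar> \<le> K \<Longrightarrow> W (Fin k) = V k"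
    and "range W \<subseteq> {b - e, a - e} \<union> range V"
proof -
  obtain N1 where N1: "\<And>k. N1 \<le> k \<Longrightarrow> a - e < V k"
    using order_tendstoD(1)[OF top, of "a - e"] e by (auto simp: eventually_at_top_linorder)
  obtain N2 where N2: "\<And>k. k \<le> N2 \<Longrightarrow> b - e < V k"
    using order_tendstoD(1)[OF bot, of "b - e"] e by (auto simp: eventually_at_bot_linorder)
  define L where "L = max (max 1 (K + 1)) (max N1 (- N2))"
  define W where "W x = (case x of NegInf \<Rightarrow> b - e | PosInf \<Rightarrow> a - e
     | Fin k \<Rightarrow> if L \<le> k then a - e else if k \<le> -L then b - e else V k)" for x
  have L: "0 < L" "K < L" "N1 \<le> L" "- N2 \<le> L" by (auto simp: L_def)
  obtain C where "0 < C" "bounded_lipschitz C W"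
    by (rule bounded_lipschitz_eventually_const[of L W]) (use L in \<open>auto simp: W_def\<close>)
  moreover have "W (Fin k) \<le> V k" for k
    using N1[of k] N2[of k] L by (auto simp: W_def)
  moreover have "W NegInf = b - e" "W PosInf = a - e" by (simp_all add: W_def)
  moreover have "W (Fin k) = V k" if "\<bar>k\<bar> \<le> K" for k
    using that L by (auto simp: W_def)
  moreover have "range W \<subseteq> {b - e, a - e} \<union> range V"
  proof
    fix y assume "y \<in> range W"
    then obtain x where "y = W x" by blast
    then show "y \<in> {b - e, a - e} \<union> range V" by (cases x) (auto simp: W_def)
  qed
  ultimately show thesis by (rule that)
qed

lemma expectation_ge_sum_finite:
  fixes W :: "'a \<Rightarrow> real"
  assumes A: "finite A" and lower: "\<And>x. - B \<le> W x" and bounded: "\<And>x. \<bar>W x\<bar> \<le> C"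
  shows "(\<Sum>x\<in>A. pmf mu x * W x) - B * measure_pmf.prob mu (- A) \<le> measure_pmf.expectation mu W"
proof -
  have int_W: "integrable (measure_pmf mu) W"
    using bounded by (intro measure_pmf.integrable_const_bound[where B = C]) auto
  have "0 \<le> C" using bounded[of undefined] by (meson abs_ge_zero order_trans)
  then have int_WA: "integrable (measure_pmf mu) (\<lambda>x. W x * indicator A x)"
    using bounded by (intro measure_pmf.integrable_const_bound[where B = C])
      (auto split: split_indicator)
  have int_B: "integrable (measure_pmf mu) (\<lambda>x. B * indicator (- A) x)"
    by (intro integrable_mult_right integrable_real_indicator)
      (auto simp: measure_pmf.emeasure_eq_measure)
  have "measure_pmf.expectation mu (\<lambda>x. W x * indicator A x) = (\<Sum>x\<in>A. pmf mu x * W x)"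
    by (subst integral_measure_pmf_real[OF A])
      (auto simp: mult.commute split: split_indicator split_indicator_asm)
  moreover have "measure_pmf.expectation mu (\<lambda>x. B * indicator (- A) x) = B * measure_pmf.prob mu (- A)"
    by simp
  moreover have "measure_pmf.expectation mu (\<lambda>x. W x * indicator A x - B * indicator (- A) x)
      \<le> measure_pmf.expectation mu W"
    using lower by (intro integral_mono Bochner_Integration.integrable_diff int_WA int_B int_W)
      (auto split: split_indicator)
  ultimately show ?thesis
    by (simp add: Bochner_Integration.integral_diff[OF int_WA int_B])
qed

lemma expectation_ge_window:
  assumes lower: "\<And>x. - B \<le> W x" and bounded: "\<And>x. \<bar>W x\<bar> \<le> C"
  shows "pmf mu NegInf * W NegInf + pmf mu PosInf * W PosInf
      + (\<Sum>k\<in>{-K<..<K}. pmf mu (Fin k) * W (Fin k)) - B * measure_pmf.prob mu (Fin ` {k. K \<le> \<bar>k\<bar>})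
    \<le> measure_pmf.expectation mu W"
proof -
  let ?A = "insert NegInf (insert PosInf (Fin ` {-K<..<K}))"
  have "- ?A = Fin ` {k. K \<le> \<bar>k\<bar>}"
  proof (rule set_eqI)
    fix x show "x \<in> - ?A \<longleftrightarrow> x \<in> Fin ` {k. K \<le> \<bar>k\<bar>}"
      by (cases x) (auto simp: image_iff abs_if)
  qed
  moreover have "(\<Sum>x\<in>?A. pmf mu x * W x) = pmf mu NegInf * W NegInf + pmf mu PosInf * W PosInf
      + (\<Sum>k\<in>{-K<..<K}. pmf mu (Fin k) * W (Fin k))"
    by (simp add: image_iff sum.reindex inj_on_def add.assoc)
  ultimately show ?thesis
    using expectation_ge_sum_finite[of ?A B W C mu] lower bounded by simp
qed

lemma prob_Fin_tail_tendsto_0: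
  "((\<lambda>n. measure_pmf.prob mu (Fin ` {k. int n \<le> \<bar>k\<bar>})) \<longlongrightarrow> 0) sequentially"
proof -
  have "(\<lambda>n. measure_pmf.prob mu (Fin ` {k. int n \<le> \<bar>k\<bar>}))
      \<longlonglongrightarrow> measure_pmf.prob mu (\<Inter>n. Fin ` {k. int n \<le> \<bar>k\<bar>})"
    by (rule measure_pmf.finite_Lim_measure_decseq) (auto simp: decseq_def)
  moreover have "(\<Inter>n. Fin ` {k. int n \<le> \<bar>k\<bar>}) = {}"
  proof -
    have "x \<notin> (\<Inter>n. Fin ` {k. int n \<le> \<bar>k\<bar>})" for x
    proof -
      have "x \<notin> Fin ` {k. int (case x of Fin j \<Rightarrow> nat \<bar>j\<bar> + 1 | _ \<Rightarrow> 0) \<le> \<bar>k\<bar>}"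
        by (cases x) auto
      then show ?thesis by (meson INT_D UNIV_I)
    qed
    then show ?thesis by (meson equals0I)
  qed
  ultimately show ?thesis by simp
qed

lemma dv_integrand_geom_extend:
  assumes "0 \<le> K" "0 < lm" "0 < lp" and v: "\<And>j. 0 < v j"
  shows dv_integrand_geom_extend_right:
      "K < k \<Longrightarrow> dv_integrand p (geom_extend K lm lp v) k = dv_geometric (p k) lp"
    and dv_integrand_geom_extend_left:
      "k < -K \<Longrightarrow> dv_integrand p (geom_extend K lm lp v) k = dv_geometric (p k) lm"
    and dv_integrand_geom_extend_inner:
      "\<bar>k\<bar> < K \<Longrightarrow> dv_integrand p (geom_extend K lm lp v) k = dv_integrand p v k"
proof -
  have pos: "0 < geom_extend K lm lp v j" for j using assms by (intro geom_extend_pos) auto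
  show "K < k \<Longrightarrow> dv_integrand p (geom_extend K lm lp v) k = dv_geometric (p k) lp"
    using geom_extend_step_right[of K k lp lm v] assms pos by (intro dv_integrand_geometric) auto
  show "k < -K \<Longrightarrow> dv_integrand p (geom_extend K lm lp v) k = dv_geometric (p k) lm"
    using geom_extend_step_left[of K k lm lp v] assms pos by (intro dv_integrand_geometric) auto
  show "\<bar>k\<bar> < K \<Longrightarrow> dv_integrand p (geom_extend K lm lp v) k = dv_integrand p v k"
    by (simp add: dv_integrand_def geom_extend_inner)
qed

lemma tendsto_dv_integrand_geom_extend:
  assumes tp: "(p \<longlongrightarrow> pp) at_top" and tm: "(p \<longlongrightarrow> pm) at_bot"
    and pm: "0 < pm" "pm < 1" and pp: "0 < pp" "pp < 1"
    and K: "0 \<le> K" and lm: "0 < lm" and lp: "0 < lp" and v: "\<And>j. 0 < v j"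
  shows tendsto_dv_integrand_geom_extend_at_top:
      "(dv_integrand p (geom_extend K lm lp v) \<longlongrightarrow> dv_geometric pp lp) at_top"
    and tendsto_dv_integrand_geom_extend_at_bot:
      "(dv_integrand p (geom_extend K lm lp v) \<longlongrightarrow> dv_geometric pm lm) at_bot"
proof -
  show "(dv_integrand p (geom_extend K lm lp v) \<longlongrightarrow> dv_geometric pp lp) at_top"
  proof (rule tendsto_cong[THEN iffD1])
    show "eventually (\<lambda>k. dv_geometric (p k) lp = dv_integrand p (geom_extend K lm lp v) k) at_top"
      using eventually_gt_at_top[of K]
      by (rule eventually_mono) (simp add: dv_integrand_geom_extend_right[OF K lm lp v])
  qed (rule tendsto_dv_geometric[OF tp pp lp])
  show "(dv_integrand p (geom_extend K lm lp v) \<longlongrightarrow> dv_geometric pm lm) at_bot"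
  proof (rule tendsto_cong[THEN iffD1])
    show "eventually (\<lambda>k. dv_geometric (p k) lm = dv_integrand p (geom_extend K lm lp v) k) at_bot"
      using eventually_le_at_bot[of "-K - 1"]
      by (rule eventually_mono) (simp add: dv_integrand_geom_extend_left[OF K lm lp v])
  qed (rule tendsto_dv_geometric[OF tm pm lm])
qed

lemma exists_dv_tests_geom_extend:
  assumes p: "\<And>k. 0 < p k \<and> p k < 1" and tp: "(p \<longlongrightarrow> pp) at_top" and tm: "(p \<longlongrightarrow> pm) at_bot"
    and pm: "0 < pm" "pm < 1" and pp: "0 < pp" "pp < 1"
    and v: "\<And>j. 1 \<le> v j" "\<And>j. v j \<le> c" and lm: "0 < lm" and lp: "0 < lp" and e: "0 < e"
  obtains B where "0 < B"
    and "\<And>K. 0 \<le> K \<Longrightarrow> \<exists>W C. dv_test p (geom_extend K lm lp v) W C \<and> (\<forall>x. - B \<le> W x)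
           \<and> W NegInf = dv_geometric pm lm - e \<and> W PosInf = dv_geometric pp lp - e
           \<and> (\<forall>k. \<bar>k\<bar> < K \<longrightarrow> W (Fin k) = dv_integrand p v k)"
proof -
  define \<rho> where "\<rho> = max c (max (max lp (1 / lp)) (max lm (1 / lm)))"
  have \<rho>: "c \<le> \<rho>" "lp \<le> \<rho>" "1 / lp \<le> \<rho>" "lm \<le> \<rho>" "1 / lm \<le> \<rho>"
    by (simp_all add: \<rho>_def)
  define B where "B = max (ln \<rho>) (max (\<bar>dv_geometric pp lp\<bar> + e) (\<bar>dv_geometric pm lm\<bar> + e))"
  have "0 < \<bar>dv_geometric pp lp\<bar> + e" using e by simp
  then have "0 < B" by (simp add: B_def less_max_iff_disj)
  moreover have "\<exists>W C. dv_test p (geom_extend K lm lp v) W C \<and> (\<forall>x. - B \<le> W x)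
           \<and> W NegInf = dv_geometric pm lm - e \<and> W PosInf = dv_geometric pp lp - e
           \<and> (\<forall>k. \<bar>k\<bar> < K \<longrightarrow> W (Fin k) = dv_integrand p v k)" if K: "0 \<le> K" for K
  proof -
    let ?U = "geom_extend K lm lp v"
    let ?V = "dv_integrand p ?U"
    have v0: "0 < v j" for j using v(1)[of j] by linarith
    have U: "0 < ?U j" for j using v0 lm lp by (intro geom_extend_pos)
    have V_lower: "- B \<le> ?V k" for k
    proof -
      have "- ln \<rho> \<le> ?V k"
        using p[of k] \<rho>
        by (intro dv_integrand_ge_neg_ln U geom_extend_succ_le[OF v K lm lp] geom_extend_pred_le[OF v K lm lp]) auto
      then show ?thesis by (simp add: B_def)
    qed
    note top = tendsto_dv_integrand_geom_extend_at_top[OF tp tm pm pp K lm lp v0]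
    note bot = tendsto_dv_integrand_geom_extend_at_bot[OF tp tm pm pp K lm lp v0]
    obtain C W where W: "0 < C" "bounded_lipschitz C W" "\<And>k. W (Fin k) \<le> ?V k"
      "W NegInf = dv_geometric pm lm - e" "W PosInf = dv_geometric pp lp - e"
      "\<And>k. \<bar>k\<bar> \<le> K \<Longrightarrow> W (Fin k) = ?V k" "range W \<subseteq> {dv_geometric pm lm - e, dv_geometric pp lp - e} \<union> range ?V"
      by (rule exists_cutoff[OF top bot e, where K = K]) (rule that)
    have "- B \<le> W x" for x
    proof -
      have "W x \<in> {dv_geometric pm lm - e, dv_geometric pp lp - e} \<union> range ?V"
        using W(7) by (meson rangeI subsetD)
      then show ?thesis using V_lower by (auto simp: B_def)
    qed
    moreover have "dv_test p ?U W C" using U W by (simp add: dv_test_def)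
    moreover have "W (Fin k) = dv_integrand p v k" if "\<bar>k\<bar> < K" for k
      using W(6)[of k] dv_integrand_geom_extend_inner[OF K lm lp v0 that] that by simp
    ultimately show ?thesis using W(4,5) by (intro exI[of _ W] exI[of _ C]) auto
  qed
  ultimately show thesis by (rule that)
qed

lemma exists_window_tail_less:
  assumes F: "finite F" and \<delta>: "0 < \<delta>"
  obtains n :: nat where "measure_pmf.prob mu (Fin ` {k. int n \<le> \<bar>k\<bar>}) < \<delta>"
    and "F \<subseteq> {- int n<..<int n}"
proof -
  have "eventually (\<lambda>n. measure_pmf.prob mu (Fin ` {k. int n \<le> \<bar>k\<bar>}) < \<delta>) sequentially"
    using prob_Fin_tail_tendsto_0 \<delta> by (rule order_tendstoD)
  moreover have "eventually (\<lambda>n. \<bar>k\<bar> < int n) sequentially" for k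
    using eventually_gt_at_top[of "nat \<bar>k\<bar>"] by (rule eventually_mono) auto
  then have "eventually (\<lambda>n. \<forall>k\<in>F. \<bar>k\<bar> < int n) sequentially"
    using F by (intro eventually_ball_finite) auto
  ultimately have "eventually (\<lambda>n. measure_pmf.prob mu (Fin ` {k. int n \<le> \<bar>k\<bar>}) < \<delta>
      \<and> (\<forall>k\<in>F. \<bar>k\<bar> < int n)) sequentially"
    by (rule eventually_conj)
  then obtain n where "measure_pmf.prob mu (Fin ` {k. int n \<le> \<bar>k\<bar>}) < \<delta>" "\<forall>k\<in>F. \<bar>k\<bar> < int n"
    by (auto simp: eventually_sequentially)
  then show thesis by (intro that) (auto simp: abs_less_iff)
qed

lemma exists_dv_test:
  assumes p: "\<And>k. 0 < p k \<and> p k < 1" and tp: "(p \<longlongrightarrow> pp) at_top" and tm: "(p \<longlongrightarrow> pm) at_bot"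
    and pm: "0 < pm" "pm < 1" and pp: "0 < pp" "pp < 1"
    and u: "\<And>k. 1 \<le> u k" and sm: "(\<lambda>k. pmf mu (Fin k) * dv_integrand p u k) summable_on UNIV"
    and lm: "0 < lm" and lp: "0 < lp" and e: "0 < e"
  obtains U W C where "dv_test p U W C"
    and "1 \<le> lp \<Longrightarrow> \<forall>k\<ge>0. 1 \<le> U k" and "lm \<le> 1 \<Longrightarrow> \<forall>k<0. 1 \<le> U k"
    and "(\<Sum>\<^sub>\<infinity>k. pmf mu (Fin k) * dv_integrand p u k) + pmf mu NegInf * dv_geometric pm lm
           + pmf mu PosInf * dv_geometric pp lp - 6 * e \<le> measure_pmf.expectation mu W"
proof -
  let ?S = "\<Sum>\<^sub>\<infinity>k. pmf mu (Fin k) * dv_integrand p u k"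
  obtain c F where c: "1 \<le> c" and F: "finite F" and trunc: "\<And>G. finite G \<Longrightarrow> F \<subseteq> G \<Longrightarrow>
      ?S - 3 * e \<le> (\<Sum>k\<in>G. pmf mu (Fin k) * dv_integrand p (\<lambda>j. min (u j) c) k)"
    by (rule dv_sum_truncation[OF p u pmf_nonneg sm e]) (rule that)
  define v where "v j = min (u j) c" for j
  have v: "1 \<le> v j" "v j \<le> c" for j using u[of j] c by (auto simp: v_def)
  obtain B where B: "0 < B" and tests: "\<And>K. 0 \<le> K \<Longrightarrow> \<exists>W C. dv_test p (geom_extend K lm lp v) W C
      \<and> (\<forall>x. - B \<le> W x) \<and> W NegInf = dv_geometric pm lm - e \<and> W PosInf = dv_geometric pp lp - e
      \<and> (\<forall>k. \<bar>k\<bar> < K \<longrightarrow> W (Fin k) = dv_integrand p v k)"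
    by (rule exists_dv_tests_geom_extend[OF p tp tm pm pp v lm lp e]) (rule that)
  have "0 < e / B" using e B by simp
  then obtain n where tail: "measure_pmf.prob mu (Fin ` {k. int n \<le> \<bar>k\<bar>}) < e / B"
    and FK: "F \<subseteq> {- int n<..<int n}"
    by (rule exists_window_tail_less[OF F]) (rule that)
  obtain W C where test: "dv_test p (geom_extend (int n) lm lp v) W C" and lower: "\<And>x. - B \<le> W x"
    and W_inf: "W NegInf = dv_geometric pm lm - e" "W PosInf = dv_geometric pp lp - e"
    and W_inner: "\<And>k. \<bar>k\<bar> < int n \<Longrightarrow> W (Fin k) = dv_integrand p v k"
    using tests[of "int n"] by auto
  have "(\<Sum>k\<in>{- int n<..<int n}. pmf mu (Fin k) * W (Fin k))
      = (\<Sum>k\<in>{- int n<..<int n}. pmf mu (Fin k) * dv_integrand p v k)"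
    by (rule sum.cong) (auto simp: W_inner abs_less_iff)
  moreover have "v = (\<lambda>j. min (u j) c)" by (simp add: fun_eq_iff v_def)
  ultimately have "?S - 3 * e \<le> (\<Sum>k\<in>{- int n<..<int n}. pmf mu (Fin k) * W (Fin k))"
    using trunc[OF _ FK] by simp
  moreover have "B * measure_pmf.prob mu (Fin ` {k. int n \<le> \<bar>k\<bar>}) \<le> e"
    using tail B by (simp add: pos_less_divide_eq mult.commute less_imp_le)
  moreover have "pmf mu NegInf * e \<le> e" "pmf mu PosInf * e \<le> e"
    using e by (simp_all add: mult_left_le_one_le pmf_le_1)
  moreover have "\<bar>W x\<bar> \<le> C" for x using test by (simp add: dv_test_def bounded_lipschitz_def)
  ultimately have "?S + pmf mu NegInf * dv_geometric pm lm + pmf mu PosInf * dv_geometric pp lp - 6 * e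
      \<le> measure_pmf.expectation mu W"
    using expectation_ge_window[of B W C mu "int n"] lower W_inf by (simp add: algebra_simps)
  moreover have "1 \<le> geom_extend (int n) lm lp v k" if "1 \<le> lp" "0 \<le> k" for k
    using that v by (intro geom_extend_ge_one_right) auto
  moreover have "1 \<le> geom_extend (int n) lm lp v k" if "lm \<le> 1" "k < 0" for k
    using that v lm by (intro geom_extend_ge_one_left) auto
  ultimately show thesis by (intro that[OF test]) auto
qed

lemma ball_decay_rate_of_dv_data:
  assumes p: "\<And>k. 0 < p k \<and> p k < 1" and tp: "(p \<longlongrightarrow> pp) at_top" and tm: "(p \<longlongrightarrow> pm) at_bot"
    and pm: "0 < pm" "pm < 1" and pp: "0 < pp" "pp < 1"
    and u: "\<And>k. 1 \<le> u k" and sm: "(\<lambda>k. pmf mu (Fin k) * dv_integrand p u k) summable_on UNIV"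
    and lm: "0 < lm" and lp: "0 < lp" and e: "0 < e"
  defines "r \<equiv> (\<Sum>\<^sub>\<infinity>k. pmf mu (Fin k) * dv_integrand p u k) + pmf mu NegInf * dv_geometric pm lm
           + pmf mu PosInf * dv_geometric pp lp - 6 * e"
  shows ball_decay_rate_of_dv_data_nonneg: "1 \<le> lp \<Longrightarrow> ball_decay_rate p {0..} mu r"
    and ball_decay_rate_of_dv_data_neg: "lm \<le> 1 \<Longrightarrow> ball_decay_rate p {..<0} mu r"
proof -
  obtain U W C where test: "dv_test p U W C"
    and nonneg: "1 \<le> lp \<Longrightarrow> \<forall>k\<ge>0. 1 \<le> U k" and neg: "lm \<le> 1 \<Longrightarrow> \<forall>k<0. 1 \<le> U k"
    and rate: "r \<le> measure_pmf.expectation mu W"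
    by (rule exists_dv_test[OF p tp tm pm pp u sm lm lp e]) (rule that; simp add: r_def)
  show "ball_decay_rate p {0..} mu r" if "1 \<le> lp"
    using ball_decay_rate_dv_test[OF p test, of "{0..}"] nonneg[OF that] rate
    by (auto intro: ball_decay_rate_mono)
  show "ball_decay_rate p {..<0} mu r" if "lm \<le> 1"
    using ball_decay_rate_dv_test[OF p test, of "{..<0}"] neg[OF that] rate
    by (auto intro: ball_decay_rate_mono)
qed

section \<open>Cramer rates at the boundary and the upper bound\<close>

lemma ICr_zero_eq:
  assumes "0 < q" "q < 1"
  shows "ICr q 0 = ereal (dv_geometric q (sqrt ((1 - q) / q)))"
proof -
  define s where "s = sqrt ((1 - q) / q)"
  have s: "0 < s" "s ^ 2 = (1 - q) / q" using assms by (simp_all add: s_def)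
  define x where "x = q * s + (1 - q) / s"
  have x: "0 < x" using assms s by (simp add: x_def add_pos_pos)
  have "x ^ 2 = q ^ 2 * s ^ 2 + 2 * q * (1 - q) + (1 - q) ^ 2 / s ^ 2"
    using s(1) by (simp add: x_def power2_eq_square field_simps)
  also have "q ^ 2 * s ^ 2 = q * (1 - q)"
    unfolding s(2) using assms by (simp add: power2_eq_square)
  also have "(1 - q) ^ 2 / s ^ 2 = q * (1 - q)"
    unfolding s(2) using assms by (simp add: power2_eq_square field_simps)
  finally have "x ^ 2 = (2 * q) * (2 * (1 - q))" by simp
  moreover have "ln (x ^ 2) = 2 * ln x" using x by (simp add: ln_realpow)
  ultimately have "2 * ln x = ln (2 * q) + ln (2 * (1 - q))"
    using assms by (simp add: ln_mult)
  then have "- ln x = 1/2 * ln (1 / (2 * (1 - q))) + 1/2 * ln (1 / (2 * q))"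
    using assms by (simp add: ln_div)
  then show ?thesis by (simp add: ICr_def dv_geometric_def x_def s_def)
qed

lemma ICr_mean_eq:
  assumes "0 < q" "q < 1"
  shows "ICr q (2 * q - 1) = ereal (dv_geometric q 1)"
proof -
  have "(1 - (2 * q - 1)) / (2 * (1 - q)) = 1" "(1 + (2 * q - 1)) / (2 * q) = 1"
    using assms by (simp_all add: field_simps)
  then show ?thesis using assms by (simp add: ICr_def dv_geometric_def)
qed

lemma INF_ICr_nonneg_le:
  assumes "0 < q" "q < 1"
  obtains l where "1 \<le> l" and "(INF x\<in>{0..1}. ICr q x) \<le> ereal (dv_geometric q l)"
proof (cases "1/2 \<le> q")
  case True
  then have "(INF x\<in>{0..1}. ICr q x) \<le> ereal (dv_geometric q 1)"
    using assms ICr_mean_eq[OF assms] by (intro INF_lower2[of "2 * q - 1"]) auto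
  then show thesis by (intro that) auto
next
  case False
  then have "1 \<le> sqrt ((1 - q) / q)" using assms by (simp add: field_simps)
  moreover have "(INF x\<in>{0..1}. ICr q x) \<le> ereal (dv_geometric q (sqrt ((1 - q) / q)))"
    using ICr_zero_eq[OF assms] by (intro INF_lower2[of 0]) auto
  ultimately show thesis by (rule that)
qed

lemma INF_ICr_nonpos_le:
  assumes "0 < q" "q < 1"
  obtains l where "0 < l" "l \<le> 1" and "(INF x\<in>{-1..0}. ICr q x) \<le> ereal (dv_geometric q l)"
proof (cases "q \<le> 1/2")
  case True
  then have "(INF x\<in>{-1..0}. ICr q x) \<le> ereal (dv_geometric q 1)"
    using assms ICr_mean_eq[OF assms] by (intro INF_lower2[of "2 * q - 1"]) auto
  then show thesis by (intro that) auto
next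
  case False
  then have "0 < sqrt ((1 - q) / q)" "sqrt ((1 - q) / q) \<le> 1" using assms by (simp_all add: field_simps)
  moreover have "(INF x\<in>{-1..0}. ICr q x) \<le> ereal (dv_geometric q (sqrt ((1 - q) / q)))"
    using ICr_zero_eq[OF assms] by (intro INF_lower2[of 0]) auto
  ultimately show thesis by (rule that)
qed

lemma pmf_Fin_le_finite_mass: "pmf mu (Fin k) \<le> 1 - pmf mu NegInf - pmf mu PosInf"
proof -
  have "measure_pmf.prob mu {NegInf, PosInf, Fin k} = pmf mu NegInf + pmf mu PosInf + pmf mu (Fin k)"
    by (simp add: measure_measure_pmf_finite)
  moreover have "measure_pmf.prob mu {NegInf, PosInf, Fin k} \<le> 1" by simp
  ultimately show ?thesis by simp
qed

lemma exists_dv_integrand_sum_gt: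
  fixes mu :: "zbar pmf"
  defines "a0 \<equiv> 1 - pmf mu NegInf - pmf mu PosInf"
  assumes D: "ereal D < ereal a0 * IDV p (\<lambda>k. pmf mu (Fin k) / a0)"
  obtains u where "\<And>k. 1 \<le> u k" and "(\<lambda>k. pmf mu (Fin k) * dv_integrand p u k) summable_on UNIV"
    and "D < (\<Sum>\<^sub>\<infinity>k. pmf mu (Fin k) * dv_integrand p u k)"
proof (cases "a0 = 0")
  case True
  then have "pmf mu (Fin k) = 0" for k
    using pmf_Fin_le_finite_mass[of mu k] pmf_nonneg[of mu "Fin k"] by (simp add: a0_def)
  moreover have "D < 0" using D True by (simp add: zero_ereal_def[symmetric])
  ultimately show thesis by (intro that[of "\<lambda>k. 1"]) auto
next
  case False
  moreover have "0 \<le> a0"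
    using pmf_Fin_le_finite_mass[of mu 0] pmf_nonneg[of mu "Fin 0"] unfolding a0_def by linarith
  ultimately have a0: "0 < a0" by simp
  define nu where "nu k = pmf mu (Fin k) / a0" for k
  have "ereal (D / a0) < IDV p nu"
    using D a0 by (cases "IDV p nu") (auto simp: nu_def[abs_def] field_simps)
  then obtain u where u: "\<And>k. 1 \<le> u k"
    and sm: "(\<lambda>k. nu k * dv_integrand p u k) summable_on UNIV"
    and gt: "D / a0 < (\<Sum>\<^sub>\<infinity>k. nu k * dv_integrand p u k)"
    unfolding IDV_def less_SUP_iff dv_integrand_def[symmetric] by auto
  have eq: "pmf mu (Fin k) * dv_integrand p u k = a0 * (nu k * dv_integrand p u k)" for k
    using a0 by (simp add: nu_def)
  show thesis
  proof (rule that[OF u])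
    show "(\<lambda>k. pmf mu (Fin k) * dv_integrand p u k) summable_on UNIV"
      unfolding eq using sm by (rule summable_on_cmult_right)
    show "D < (\<Sum>\<^sub>\<infinity>k. pmf mu (Fin k) * dv_integrand p u k)"
      unfolding eq infsum_cmult_right' using gt a0 by (simp add: divide_less_eq mult.commute)
  qed
qed

lemma boundary_rate_le_dv_geometric:
  assumes "0 \<le> a" "0 \<le> b" "0 < q" "q < 1" and "I \<le> ereal y"
  shows "ereal a * ICr q 0 + ereal b * I \<le> ereal (a * dv_geometric q (sqrt ((1 - q) / q)) + b * y)"
proof -
  have "ereal b * I \<le> ereal (b * y)"
    using ereal_mult_left_mono[OF assms(5), of "ereal b"] assms(2) by simp
  then show ?thesis
    unfolding plus_ereal.simps(1)[symmetric] by (intro add_mono) (simp_all add: ICr_zero_eq assms)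
qed

lemma exists_dv_data_below_Irate:
  assumes pm: "0 < pm" "pm < 1" and pp: "0 < pp" "pp < 1" and M: "ereal M < Irate p pm pp mu"
  obtains u lmA lpA lmB lpB where "\<And>k. 1 \<le> u k"
    and "(\<lambda>k. pmf mu (Fin k) * dv_integrand p u k) summable_on UNIV"
    and "0 < lmA" "1 \<le> lpA" "0 < lmB" "lmB \<le> 1" "0 < lpB"
    and "M < (\<Sum>\<^sub>\<infinity>k. pmf mu (Fin k) * dv_integrand p u k)
             + pmf mu NegInf * dv_geometric pm lmA + pmf mu PosInf * dv_geometric pp lpA"
    and "M < (\<Sum>\<^sub>\<infinity>k. pmf mu (Fin k) * dv_integrand p u k)
             + pmf mu NegInf * dv_geometric pm lmB + pmf mu PosInf * dv_geometric pp lpB"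
proof -
  define am where "am = pmf mu NegInf"
  define ap where "ap = pmf mu PosInf"
  define sA where "sA = sqrt ((1 - pm) / pm)"
  define sB where "sB = sqrt ((1 - pp) / pp)"
  obtain lA where lA: "1 \<le> lA" "(INF x\<in>{0..1}. ICr pp x) \<le> ereal (dv_geometric pp lA)"
    using INF_ICr_nonneg_le[OF pp] by blast
  obtain lB where lB: "0 < lB" "lB \<le> 1" "(INF x\<in>{-1..0}. ICr pm x) \<le> ereal (dv_geometric pm lB)"
    using INF_ICr_nonpos_le[OF pm] by blast
  define A where "A = am * dv_geometric pm sA + ap * dv_geometric pp lA"
  define B where "B = ap * dv_geometric pp sB + am * dv_geometric pm lB"
  have A_ge: "ereal am * ICr pm 0 + ereal ap * (INF x\<in>{0..1}. ICr pp x) \<le> ereal A"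
    unfolding A_def sA_def am_def ap_def by (rule boundary_rate_le_dv_geometric[OF _ _ pm lA(2)]) simp_all
  have B_ge: "ereal ap * ICr pp 0 + ereal am * (INF x\<in>{-1..0}. ICr pm x) \<le> ereal B"
    unfolding B_def sB_def am_def ap_def by (rule boundary_rate_le_dv_geometric[OF _ _ pp lB(3)]) simp_all
  define mn where "mn = min A B"
  have "min (ereal am * ICr pm 0 + ereal ap * (INF x\<in>{0..1}. ICr pp x))
      (ereal ap * ICr pp 0 + ereal am * (INF x\<in>{-1..0}. ICr pm x)) \<le> ereal mn"
    using min.mono[OF A_ge B_ge] by (simp add: mn_def)
  then have "Irate p pm pp mu
      \<le> ereal (1 - am - ap) * IDV p (\<lambda>k. pmf mu (Fin k) / (1 - am - ap)) + ereal mn"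
    unfolding Irate_def Let_def am_def[symmetric] ap_def[symmetric] by (rule add_left_mono)
  with M have "ereal M < ereal (1 - am - ap) * IDV p (\<lambda>k. pmf mu (Fin k) / (1 - am - ap)) + ereal mn"
    by (rule less_le_trans)
  then have "ereal (M - mn) < ereal (1 - am - ap) * IDV p (\<lambda>k. pmf mu (Fin k) / (1 - am - ap))"
    by (cases "ereal (1 - am - ap) * IDV p (\<lambda>k. pmf mu (Fin k) / (1 - am - ap))") auto
  then obtain u where u: "\<And>k. 1 \<le> u k" "(\<lambda>k. pmf mu (Fin k) * dv_integrand p u k) summable_on UNIV"
    and gt: "M - mn < (\<Sum>\<^sub>\<infinity>k. pmf mu (Fin k) * dv_integrand p u k)"
    unfolding am_def ap_def by (rule exists_dv_integrand_sum_gt) (rule that)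
  have "M < (\<Sum>\<^sub>\<infinity>k. pmf mu (Fin k) * dv_integrand p u k) + A"
    and "M < (\<Sum>\<^sub>\<infinity>k. pmf mu (Fin k) * dv_integrand p u k) + B"
    using gt min.cobounded1[of A B] min.cobounded2[of A B] unfolding mn_def by linarith+
  moreover have "0 < sA" "0 < sB" using pm pp by (simp_all add: sA_def sB_def)
  ultimately show thesis
    using that[of u sA lA lB sB] u lA(1) lB(1,2) by (simp add: A_def B_def am_def ap_def add.assoc)
qed

lemma ball_decay_rate_below_Irate:
  assumes p: "\<And>k. 0 < p k \<and> p k < 1" and tp: "(p \<longlongrightarrow> pp) at_top" and tm: "(p \<longlongrightarrow> pm) at_bot"
    and pm: "0 < pm" "pm < 1" and pp: "0 < pp" "pp < 1" and M: "ereal M < Irate p pm pp mu"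
  shows "ball_decay_rate p UNIV mu M"
proof -
  obtain M' where "M < M'" and M': "ereal M' < Irate p pm pp mu"
    using ereal_dense2[OF M] by auto
  obtain u lmA lpA lmB lpB where u: "\<And>k. 1 \<le> u k"
    and sm: "(\<lambda>k. pmf mu (Fin k) * dv_integrand p u k) summable_on UNIV"
    and l: "0 < lmA" "1 \<le> lpA" "0 < lmB" "lmB \<le> 1" "0 < lpB"
    and A: "M' < (\<Sum>\<^sub>\<infinity>k. pmf mu (Fin k) * dv_integrand p u k)
             + pmf mu NegInf * dv_geometric pm lmA + pmf mu PosInf * dv_geometric pp lpA"
    and B: "M' < (\<Sum>\<^sub>\<infinity>k. pmf mu (Fin k) * dv_integrand p u k)
             + pmf mu NegInf * dv_geometric pm lmB + pmf mu PosInf * dv_geometric pp lpB"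
    by (rule exists_dv_data_below_Irate[OF pm pp M']) (rule that)
  define e where "e = (M' - M) / 6"
  have e: "0 < e" and e6: "6 * e = M' - M" using \<open>M < M'\<close> by (simp_all add: e_def)
  have "0 < lpA" using l(2) by linarith
  have "ball_decay_rate p {0..} mu M"
  proof (rule ball_decay_rate_mono)
    show "ball_decay_rate p {0..} mu ((\<Sum>\<^sub>\<infinity>k. pmf mu (Fin k) * dv_integrand p u k)
        + pmf mu NegInf * dv_geometric pm lmA + pmf mu PosInf * dv_geometric pp lpA - 6 * e)"
      by (rule ball_decay_rate_of_dv_data_nonneg[OF p tp tm pm pp u sm l(1) \<open>0 < lpA\<close> e l(2)])
  qed (use A e6 in linarith)
  moreover have "ball_decay_rate p {..<0} mu M"
  proof (rule ball_decay_rate_mono)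
    show "ball_decay_rate p {..<0} mu ((\<Sum>\<^sub>\<infinity>k. pmf mu (Fin k) * dv_integrand p u k)
        + pmf mu NegInf * dv_geometric pm lmB + pmf mu PosInf * dv_geometric pp lpB - 6 * e)"
      by (rule ball_decay_rate_of_dv_data_neg[OF p tp tm pm pp u sm l(3) l(5) e l(4)])
  qed (use B e6 in linarith)
  moreover have "{0..} \<union> {..<0} = (UNIV :: int set)" by auto
  ultimately show ?thesis by (metis ball_decay_rate_Un)
qed

theorem proposition5p1:
  fixes p :: "int \<Rightarrow> real" and pm pp :: real and mu :: "zbar pmf"
  assumes "\<And>k. 0 < p k \<and> p k < 1"
    and "(p \<longlongrightarrow> pp) at_top" and "(p \<longlongrightarrow> pm) at_bot"
    and "0 < pm" and "pm < 1" and "0 < pp" and "pp < 1"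
  shows "\<exists>L. ((\<lambda>\<epsilon>. limsup (\<lambda>n. ereal (1 / real n) * eln (prob_ball p n mu \<epsilon>)))
              \<longlongrightarrow> L) (at_right 0)
          \<and> L \<le> - Irate p pm pp mu"
proof (intro exI conjI)
  let ?L = "INF \<epsilon>\<in>{0<..}. limsup (\<lambda>n. ereal (1 / real n) * eln (prob_ball p n mu \<epsilon>))"
  show "((\<lambda>\<epsilon>. limsup (\<lambda>n. ereal (1 / real n) * eln (prob_ball p n mu \<epsilon>))) \<longlongrightarrow> ?L) (at_right 0)"
    by (rule tendsto_limsup_prob_ball)
  have "Irate p pm pp mu \<le> - ?L"
  proof (rule dense_le)
    fix y assume y: "y < Irate p pm pp mu"
    show "y \<le> - ?L"
    proof (cases y)
      case (real M)
      then have "?L \<le> ereal (- M)"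
        using y assms by (intro INF_limsup_prob_ball_le ball_decay_rate_below_Irate) auto
      then show ?thesis using real by (metis ereal_minus_le_minus ereal_uminus_uminus uminus_ereal.simps(1))
    qed (use y in auto)
  qed
  then show "?L \<le> - Irate p pm pp mu" by (metis ereal_minus_le_minus ereal_uminus_uminus)
qed

end
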